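(* Let $\{\mu_n\}_{n\in\mathbb{N}}\cup\{\mu\}\subset\mathcal{M}(\mathbb{R})$ and $\alpha\in\mathbb{R}$. Suppose $\{\mu_n\}$ has no mass at any point of $\mathbb{R}$. Then the following are equivalent: (a) $F^{(\alpha)}_{\mu_n}(x)\to F^{(\alpha)}_\mu(x)$ at all continuity points $x$ of $\mu$; (b) $\mu_n\to\mu$ vaguely. Moreover, the equivalence also holds for $\alpha=-\infty$ (resp. $\alpha=+\infty$) under the additional assumption that $\{\mu_n\}$ has no mass at $-\infty$ (resp. $+\infty$), i.e. for every $\varepsilon>0$ there is $c\in\mathbb{R}$ with $\limsup_n|\mu_n|((-\infty,c))\le\varepsilon$ (resp. $\limsup_n|\mu_n|((c,\infty))\le\varepsilon$).
   Context: $\mathcal{M}(\mathbb{R})$ is the set of finite signed Borel measures on $\mathbb{R}$; $|\mu|$ denotes the variation measure. For $\alpha\in\mathbb{R}$, $F^{(\alpha)}_\mu(x)=\mu((\alpha,x])$ for $x\ge\alpha$ and $F^{(\alpha)}_\mu(x)=-\mu((x,\alpha])$ for $x<\alpha$; further $F^{(-\infty)}_\mu(x)=\mu((-\infty,x])$ and $F^{(+\infty)}_\mu(x)=-\mu((x,\infty))$. A point $x$ is a continuity point of $\mu$ if $\mu(\{x\})=0$. Vague convergence $\mu_n\to\mu$ means $\int f\,d\mu_n\to\int f\,d\mu$ for all continuous $f$ with compact support. $\{\mu_n\}$ has no mass at a point $x\in\mathbb{R}$ if for every $\varepsilon>0$ there is an open neighbourhood $N$ of $x$ with $\limsup_{n\to\infty}|\mu_n|(N)\le\varepsilon$.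 *)

theory Defs
  imports "HOL-Analysis.Analysis"
begin

text \<open>A finite signed Borel measure on the reals is represented as a pair (P, N) of
finite Borel measures, standing for the signed measure P - N.  Every finite signed
measure arises this way (Jordan decomposition), and every notion below depends only
on the difference P - N, not on the chosen pair.\<close>

type_synonym smeasure = "real measure \<times> real measure"

definition is_smeasure :: "smeasure \<Rightarrow> bool" where
  "is_smeasure \<mu> \<longleftrightarrow> sets (fst \<mu>) = sets borel \<and> sets (snd \<mu>) = sets borel
     \<and> finite_measure (fst \<mu>) \<and> finite_measure (snd \<mu>)"

definition sm_val :: "smeasure \<Rightarrow> real set \<Rightarrow> real" where
  "sm_val \<mu> A = measure (fst \<mu>) A - measure (snd \<mu>) A"

definition sm_var :: "smeasure \<Rightarrow> real set \<Rightarrow> real" where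
  "sm_var \<mu> A = Sup {(\<Sum>B\<in>\<P>. \<bar>sm_val \<mu> B\<bar>) | \<P>. finite \<P> \<and> \<P> \<subseteq> sets borel
        \<and> (\<forall>B\<in>\<P>. B \<subseteq> A) \<and> disjoint \<P>}"

definition sm_int :: "smeasure \<Rightarrow> (real \<Rightarrow> real) \<Rightarrow> real" where
  "sm_int \<mu> f = integral\<^sup>L (fst \<mu>) f - integral\<^sup>L (snd \<mu>) f"

definition sm_F :: "ereal \<Rightarrow> smeasure \<Rightarrow> real \<Rightarrow> real" where
  "sm_F \<alpha> \<mu> x = (case \<alpha> of
       ereal a \<Rightarrow> (if a \<le> x then sm_val \<mu> {a<..x} else - sm_val \<mu> {x<..a})
     | MInfty \<Rightarrow> sm_val \<mu> {..x}
     | PInfty \<Rightarrow> - sm_val \<mu> {x<..})"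

definition continuity_point :: "smeasure \<Rightarrow> real \<Rightarrow> bool" where
  "continuity_point \<mu> x \<longleftrightarrow> sm_val \<mu> {x} = 0"

definition vague_conv :: "(nat \<Rightarrow> smeasure) \<Rightarrow> smeasure \<Rightarrow> bool" where
  "vague_conv \<mu>s \<mu> \<longleftrightarrow> (\<forall>f :: real \<Rightarrow> real. continuous_on UNIV f
      \<and> (\<exists>K. compact K \<and> (\<forall>x. x \<notin> K \<longrightarrow> f x = 0))
      \<longrightarrow> (\<lambda>n. sm_int (\<mu>s n) f) \<longlonglongrightarrow> sm_int \<mu> f)"

definition no_mass_at :: "(nat \<Rightarrow> smeasure) \<Rightarrow> real \<Rightarrow> bool" where
  "no_mass_at \<mu>s x \<longleftrightarrow> (\<forall>\<epsilon>>0. \<exists>N. open N \<and> x \<in> N \<and>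
      limsup (\<lambda>n. ereal (sm_var (\<mu>s n) N)) \<le> ereal \<epsilon>)"

definition no_mass_at_minf :: "(nat \<Rightarrow> smeasure) \<Rightarrow> bool" where
  "no_mass_at_minf \<mu>s \<longleftrightarrow> (\<forall>\<epsilon>>0. \<exists>c. limsup (\<lambda>n. ereal (sm_var (\<mu>s n) {..<c})) \<le> ereal \<epsilon>)"

definition no_mass_at_pinf :: "(nat \<Rightarrow> smeasure) \<Rightarrow> bool" where
  "no_mass_at_pinf \<mu>s \<longleftrightarrow> (\<forall>\<epsilon>>0. \<exists>c. limsup (\<lambda>n. ereal (sm_var (\<mu>s n) {c<..})) \<le> ereal \<epsilon>)"

end

theory Submission
  imports Defs
begin

text \<open>Call \<open>\<mu>\<close> bounded by \<open>V\<close> on \<open>A\<close> if \<open>|\<mu>(B)| \<le> V\<close> for all Borel \<open>B \<subseteq> A\<close>. A layer-cake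
  discretisation turns this into \<open>|\<integral>h d\<mu>| \<le> 2cV\<close> whenever \<open>|h| \<le> c\<close> and \<open>h\<close> vanishes off \<open>A\<close>,
  which is the only estimate needed in either direction.

  (b) \<open>\<Longrightarrow>\<close> (a): the indicator of \<open>(l,r]\<close>, \<open>(-\<infinity>,r]\<close> or \<open>(l,\<infinity>)\<close> is the pointwise limit of
  trapezoids \<open>g\<^sub>k\<close>. For \<open>\<mu>\<close> dominated convergence applies; for the \<open>\<mu>\<^sub>n\<close> the error is uniform in
  \<open>n\<close>, since \<open>g\<^sub>k\<close> differs from the indicator only close to the finite end points and far out in
  the tails, where the hypotheses say that the \<open>\<mu>\<^sub>n\<close> eventually carry little mass. So in fact
  \<open>F\<^sub>n(x) \<longrightarrow> F(x)\<close> at every \<open>x\<close>.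

  (a) \<open>\<Longrightarrow>\<close> (b): a continuous compactly supported \<open>f\<close> is uniformly close to a step function
  on a grid of continuity points of \<open>\<mu>\<close>. The integral of a step function is a finite combination
  of values of \<open>F\<close>, and the approximation error is controlled by a bound for the \<open>\<mu>\<^sub>n\<close> on a
  compact interval, which follows from the absence of point masses by compactness.\<close>

section \<open>Local mass bounds for signed measures\<close>

lemma is_smeasureD:
  assumes "is_smeasure \<mu>"
  shows "finite_measure (fst \<mu>)" "finite_measure (snd \<mu>)"
    "sets (fst \<mu>) = sets borel" "sets (snd \<mu>) = sets borel"
    "space (fst \<mu>) = UNIV" "space (snd \<mu>) = UNIV"
  using assms sets_eq_imp_space_eq[of "fst \<mu>" borel] sets_eq_imp_space_eq[of "snd \<mu>" borel]
  unfolding is_smeasure_def by auto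

lemma sm_integrable:
  fixes f :: "real \<Rightarrow> real"
  assumes \<mu>: "is_smeasure \<mu>" and f: "f \<in> borel_measurable borel" "\<And>x. \<bar>f x\<bar> \<le> B"
  shows "integrable (fst \<mu>) f" "integrable (snd \<mu>) f"
proof -
  have "integrable M f" if "finite_measure M" "sets M = sets borel" for M
  proof -
    have "f \<in> borel_measurable M" using f(1) measurable_cong_sets[OF that(2) refl, of borel] by metis
    then show ?thesis using f(2) by (intro finite_measure.integrable_const_bound[OF that(1), where B=B]) auto
  qed
  then show "integrable (fst \<mu>) f" "integrable (snd \<mu>) f"
    using is_smeasureD[OF \<mu>] by auto
qed

lemma sm_int_diff:
  fixes f g :: "real \<Rightarrow> real"
  assumes "is_smeasure \<mu>" "f \<in> borel_measurable borel" "\<And>x. \<bar>f x\<bar> \<le> B"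
    "g \<in> borel_measurable borel" "\<And>x. \<bar>g x\<bar> \<le> C"
  shows "sm_int \<mu> (\<lambda>x. f x - g x) = sm_int \<mu> f - sm_int \<mu> g"
  using sm_integrable[OF assms(1-3)] sm_integrable[OF assms(1,4,5)]
  unfolding sm_int_def by simp

lemma sm_int_cmult: "sm_int \<mu> (\<lambda>x. c * f x) = c * sm_int \<mu> f"
  unfolding sm_int_def by (simp add: right_diff_distrib)

lemma sm_int_indicator:
  assumes "is_smeasure \<mu>"
  shows "sm_int \<mu> (indicator A) = sm_val \<mu> A"
  using is_smeasureD[OF assms] unfolding sm_int_def sm_val_def by simp

lemma sm_int_sum_indicator:
  fixes a :: "'i \<Rightarrow> real" and S :: "'i \<Rightarrow> real set"
  assumes \<mu>: "is_smeasure \<mu>" and "finite I" and S: "\<And>i. i \<in> I \<Longrightarrow> S i \<in> sets borel"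
  shows "sm_int \<mu> (\<lambda>x. \<Sum>i\<in>I. a i * indicator (S i) x) = (\<Sum>i\<in>I. a i * sm_val \<mu> (S i))"
proof -
  have "integral\<^sup>L M (\<lambda>x. \<Sum>i\<in>I. a i * indicator (S i) x) = (\<Sum>i\<in>I. a i * measure M (S i))"
    if M: "finite_measure M" "sets M = sets borel" for M
  proof -
    have "integrable M (indicator (S i) :: real \<Rightarrow> real)" if "i \<in> I" for i
      using S[OF that] M
      by (intro integrable_real_indicator) (auto simp: finite_measure.emeasure_finite less_top[symmetric])
    then show ?thesis using S M by (simp add: Bochner_Integration.integral_sum)
  qed
  then show ?thesis
    using is_smeasureD[OF \<mu>] unfolding sm_int_def sm_val_def
    by (simp add: sum_subtractf right_diff_distrib)
qed

definition sm_mass :: "smeasure \<Rightarrow> real" where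
  "sm_mass \<mu> = measure (fst \<mu>) UNIV + measure (snd \<mu>) UNIV"

lemma abs_sm_int_le_mass:
  fixes f :: "real \<Rightarrow> real"
  assumes \<mu>: "is_smeasure \<mu>" and f: "f \<in> borel_measurable borel" "\<And>x. \<bar>f x\<bar> \<le> c"
  shows "\<bar>sm_int \<mu> f\<bar> \<le> c * sm_mass \<mu>"
proof -
  note s = is_smeasureD[OF \<mu>]
  have "\<bar>integral\<^sup>L M f\<bar> \<le> c * measure M UNIV"
    if "finite_measure M" "integrable M f" "space M = UNIV" for M
  proof -
    have "\<bar>integral\<^sup>L M f\<bar> \<le> (\<integral>x. \<bar>f x\<bar> \<partial>M)" by (rule integral_abs_bound)
    also have "\<dots> \<le> (\<integral>x. c \<partial>M)"
      using f that by (intro integral_mono finite_measure.integrable_const) auto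
    finally show ?thesis using that by (simp add: mult.commute)
  qed
  from this[OF s(1) sm_integrable(1)[OF \<mu> f] s(5)] this[OF s(2) sm_integrable(2)[OF \<mu> f] s(6)]
  show ?thesis unfolding sm_int_def sm_mass_def by (simp add: distrib_left)
qed

lemma sm_val_Un:
  assumes \<mu>: "is_smeasure \<mu>" and "A \<in> sets borel" "B \<in> sets borel" "A \<inter> B = {}"
  shows "sm_val \<mu> (A \<union> B) = sm_val \<mu> A + sm_val \<mu> B"
  using finite_measure.finite_measure_Union[OF is_smeasureD(1)[OF \<mu>], of A B]
    finite_measure.finite_measure_Union[OF is_smeasureD(2)[OF \<mu>], of A B]
    assms is_smeasureD[OF \<mu>] unfolding sm_val_def by simp

text \<open>Up to a factor 2 this says \<open>|\<mu>|(A) \<le> V\<close>, but without partitions.\<close>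

definition sm_bounded_on :: "smeasure \<Rightarrow> real set \<Rightarrow> real \<Rightarrow> bool" where
  "sm_bounded_on \<mu> A V \<longleftrightarrow> (\<forall>B\<in>sets borel. B \<subseteq> A \<longrightarrow> \<bar>sm_val \<mu> B\<bar> \<le> V)"

lemma sm_bounded_on_mono:
  "sm_bounded_on \<mu> A V \<Longrightarrow> A' \<subseteq> A \<Longrightarrow> V \<le> V' \<Longrightarrow> sm_bounded_on \<mu> A' V'"
  unfolding sm_bounded_on_def by force

lemma sm_bounded_on_Un:
  assumes \<mu>: "is_smeasure \<mu>" and A: "A \<in> sets borel"
    and "sm_bounded_on \<mu> A V" "sm_bounded_on \<mu> A' V'"
  shows "sm_bounded_on \<mu> (A \<union> A') (V + V')"
  unfolding sm_bounded_on_def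
proof (intro ballI impI)
  fix B assume B: "B \<in> sets borel" "B \<subseteq> A \<union> A'"
  have "sm_val \<mu> B = sm_val \<mu> (B \<inter> A \<union> (B - A))" by (simp add: Int_Diff_Un)
  also have "\<dots> = sm_val \<mu> (B \<inter> A) + sm_val \<mu> (B - A)"
    using A B by (intro sm_val_Un[OF \<mu>]) auto
  finally have "sm_val \<mu> B = sm_val \<mu> (B \<inter> A) + sm_val \<mu> (B - A)" .
  moreover have "B \<inter> A \<in> sets borel" "B - A \<in> sets borel" "B - A \<subseteq> A'"
    using A B by auto
  then have "\<bar>sm_val \<mu> (B \<inter> A)\<bar> \<le> V" "\<bar>sm_val \<mu> (B - A)\<bar> \<le> V'"
    using assms(3,4) unfolding sm_bounded_on_def by auto
  ultimately show "\<bar>sm_val \<mu> B\<bar> \<le> V + V'" by linarith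
qed

lemma sm_bounded_on_Union:
  assumes \<mu>: "is_smeasure \<mu>" and "finite \<N>" "\<N> \<subseteq> sets borel"
    and "\<And>N. N \<in> \<N> \<Longrightarrow> sm_bounded_on \<mu> N V"
  shows "sm_bounded_on \<mu> (\<Union>\<N>) (real (card \<N>) * V)"
  using assms(2-)
proof (induction \<N> rule: finite_induct)
  case empty
  then show ?case by (simp add: sm_bounded_on_def sm_val_def)
next
  case (insert N \<N>)
  then have "sm_bounded_on \<mu> (N \<union> \<Union>\<N>) (V + real (card \<N>) * V)"
    by (intro sm_bounded_on_Un[OF \<mu>]) auto
  then show ?case using insert by (simp add: algebra_simps)
qed

lemma sm_bounded_on_total:
  assumes \<mu>: "is_smeasure \<mu>"
  shows "sm_bounded_on \<mu> A (sm_mass \<mu>)"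
  unfolding sm_bounded_on_def sm_val_def sm_mass_def
proof (intro ballI impI)
  fix B :: "real set"
  note s = is_smeasureD[OF \<mu>]
  have "measure (fst \<mu>) B \<le> measure (fst \<mu>) UNIV" "measure (snd \<mu>) B \<le> measure (snd \<mu>) UNIV"
    using finite_measure.bounded_measure[OF s(1), of B] finite_measure.bounded_measure[OF s(2), of B] s
    by simp_all
  then show "\<bar>measure (fst \<mu>) B - measure (snd \<mu>) B\<bar> \<le> measure (fst \<mu>) UNIV + measure (snd \<mu>) UNIV"
    using measure_nonneg[of "fst \<mu>" B] measure_nonneg[of "snd \<mu>" B] by linarith
qed

lemma sm_bounded_on_sm_var:
  assumes \<mu>: "is_smeasure \<mu>"
  shows "sm_bounded_on \<mu> A (sm_var \<mu> A)"
  unfolding sm_bounded_on_def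
proof (intro ballI impI)
  fix B assume B: "B \<in> sets borel" "B \<subseteq> A"
  note s = is_smeasureD[OF \<mu>]
  let ?sums = "{(\<Sum>B\<in>\<P>. \<bar>sm_val \<mu> B\<bar>) | \<P>. finite \<P> \<and> \<P> \<subseteq> sets borel
        \<and> (\<forall>B\<in>\<P>. B \<subseteq> A) \<and> disjoint \<P>}"
  have bdd: "bdd_above ?sums"
  proof (rule bdd_aboveI)
    fix x assume "x \<in> ?sums"
    then obtain \<P> where x: "x = (\<Sum>B\<in>\<P>. \<bar>sm_val \<mu> B\<bar>)"
      and \<P>: "finite \<P>" "\<P> \<subseteq> sets borel" "disjoint \<P>" by blast
    have "x \<le> (\<Sum>B\<in>\<P>. measure (fst \<mu>) B) + (\<Sum>B\<in>\<P>. measure (snd \<mu>) B)"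
      unfolding x sum.distrib[symmetric] sm_val_def
    proof (intro sum_mono)
      fix B
      show "\<bar>measure (fst \<mu>) B - measure (snd \<mu>) B\<bar> \<le> measure (fst \<mu>) B + measure (snd \<mu>) B"
        using measure_nonneg[of "fst \<mu>" B] measure_nonneg[of "snd \<mu>" B] by linarith
    qed
    also have "\<dots> = measure (fst \<mu>) (\<Union>\<P>) + measure (snd \<mu>) (\<Union>\<P>)"
      using finite_measure.finite_measure_finite_Union[OF s(1), of \<P> id]
        finite_measure.finite_measure_finite_Union[OF s(2), of \<P> id] \<P> s
      by (auto simp: disjoint_family_on_def disjoint_def)
    also have "\<dots> \<le> measure (fst \<mu>) UNIV + measure (snd \<mu>) UNIV"
      using finite_measure.bounded_measure[OF s(1)] finite_measure.bounded_measure[OF s(2)] s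
      by (metis add_mono)
    finally show "x \<le> measure (fst \<mu>) UNIV + measure (snd \<mu>) UNIV" .
  qed
  have "\<bar>sm_val \<mu> B\<bar> \<in> ?sums"
    using B by (intro CollectI exI[of _ "{B}"]) (auto simp: disjoint_def)
  then show "\<bar>sm_val \<mu> B\<bar> \<le> sm_var \<mu> A"
    unfolding sm_var_def using bdd by (rule cSup_upper)
qed

lemma card_nat_le_real_eq_floor:
  fixes t :: real and k :: nat
  assumes "0 \<le> t" "t \<le> real k"
  shows "card {j\<in>{1..k}. real j \<le> t} = nat \<lfloor>t\<rfloor>"
proof -
  have iff: "real j \<le> t \<longleftrightarrow> j \<le> nat \<lfloor>t\<rfloor>" for j :: nat
  proof -
    have "real j \<le> t \<longleftrightarrow> int j \<le> \<lfloor>t\<rfloor>" by (simp add: le_floor_iff)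
    also have "\<dots> \<longleftrightarrow> j \<le> nat \<lfloor>t\<rfloor>" using assms(1) by (simp add: le_nat_iff)
    finally show ?thesis .
  qed
  have "nat \<lfloor>t\<rfloor> \<le> k"
    using floor_mono[OF assms(2)] by (simp add: nat_le_iff)
  then have "{j\<in>{1..k}. real j \<le> t} = {1..nat \<lfloor>t\<rfloor>}"
    unfolding iff by auto
  then show ?thesis by simp
qed

lemma level_set_average:
  fixes t :: real and k :: nat
  assumes "0 \<le> t" "t \<le> 1" "k > 0"
  shows "0 \<le> t - real (card {j\<in>{1..k}. real j \<le> real k * t}) / real k \<and>
    t - real (card {j\<in>{1..k}. real j \<le> real k * t}) / real k \<le> 1 / real k"
proof -
  define y where "y = real k * t"
  have "card {j\<in>{1..k}. real j \<le> y} = nat \<lfloor>y\<rfloor>"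
    using assms by (intro card_nat_le_real_eq_floor) (auto simp: y_def mult_left_le)
  moreover have "real (nat \<lfloor>y\<rfloor>) = of_int \<lfloor>y\<rfloor>" using assms by (simp add: y_def)
  ultimately have "0 \<le> y - real (card {j\<in>{1..k}. real j \<le> y})" "y - real (card {j\<in>{1..k}. real j \<le> y}) \<le> 1"
    using of_int_floor_le[of y] real_of_int_floor_add_one_gt[of y] by linarith+
  moreover have "t - real (card {j\<in>{1..k}. real j \<le> y}) / real k = (y - real (card {j\<in>{1..k}. real j \<le> y})) / real k"
    using assms(3) by (simp add: y_def diff_divide_distrib)
  ultimately show ?thesis by (simp add: y_def divide_right_mono)
qed

text \<open>Layer-cake discretisation: \<open>h\<close> is uniformly within \<open>1/k\<close> of the average of the indicators of
  its \<open>k\<close> upper level sets \<open>{k h \<ge> j}\<close>, all of which lie in \<open>A\<close>.\<close>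

lemma abs_sm_int_le_discretised:
  fixes h :: "real \<Rightarrow> real"
  assumes \<mu>: "is_smeasure \<mu>" and hm: "h \<in> borel_measurable borel"
    and h01: "\<And>x. 0 \<le> h x \<and> h x \<le> 1" and h0: "\<And>x. x \<notin> A \<Longrightarrow> h x = 0"
    and V: "sm_bounded_on \<mu> A V" and k: "k > 0"
  shows "\<bar>sm_int \<mu> h\<bar> \<le> V + sm_mass \<mu> / real k"
proof -
  define S where "S j = {x. real j \<le> real k * h x}" for j :: nat
  define s where "s x = (\<Sum>j\<in>{1..k}. 1 / real k * indicator (S j) x)" for x
  have [measurable]: "h \<in> borel_measurable borel" by (rule hm)
  have S[measurable]: "S j \<in> sets borel" for j unfolding S_def by measurable
  have sm: "s \<in> borel_measurable borel" unfolding s_def by measurable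
  have "S j \<subseteq> A" if "j \<ge> 1" for j
    using h0 that by (force simp: S_def)
  then have VS: "\<bar>sm_val \<mu> (S j)\<bar> \<le> V" if "j \<in> {1..k}" for j
    using V S that unfolding sm_bounded_on_def by auto
  have "sm_int \<mu> s = 1 / real k * (\<Sum>j\<in>{1..k}. sm_val \<mu> (S j))"
    unfolding s_def sm_int_sum_indicator[OF \<mu> finite_atLeastAtMost S] by (simp only: sum_distrib_left)
  also have "\<bar>\<dots>\<bar> \<le> 1 / real k * (\<Sum>j\<in>{1..k}. \<bar>sm_val \<mu> (S j)\<bar>)"
    using sum_abs[of "\<lambda>j. sm_val \<mu> (S j)" "{1..k}"] by (simp add: abs_mult divide_right_mono)
  also have "\<dots> \<le> 1 / real k * (real k * V)"
    using sum_bounded_above[of "{1..k}" "\<lambda>j. \<bar>sm_val \<mu> (S j)\<bar>" V] VS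
    by (intro mult_left_mono) auto
  finally have s_bound: "\<bar>sm_int \<mu> s\<bar> \<le> V" using k by simp
  have "s x = real (card {j\<in>{1..k}. real j \<le> real k * h x}) / real k" for x
  proof -
    have "(\<Sum>j\<in>{1..k}. indicator (S j) x) = real (card {j\<in>{1..k}. real j \<le> real k * h x})"
      by (simp add: S_def indicator_def sum.If_cases Int_def)
    then show ?thesis by (simp add: s_def sum_divide_distrib[symmetric])
  qed
  then have hs: "0 \<le> h x - s x \<and> h x - s x \<le> 1 / real k" for x
    using level_set_average[of "h x" k] h01[of x] k by simp
  have "1 / real k \<le> 1" using k by simp
  then have "\<bar>s x\<bar> \<le> 1" for x using hs[of x] h01[of x] by (auto simp: abs_le_iff)
  then have "sm_int \<mu> h - sm_int \<mu> s = sm_int \<mu> (\<lambda>x. h x - s x)"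
    using h01 by (intro sm_int_diff[OF \<mu> hm _ sm, symmetric, of 1]) auto
  also have "\<bar>\<dots>\<bar> \<le> 1 / real k * sm_mass \<mu>"
    using hs hm sm by (intro abs_sm_int_le_mass[OF \<mu>]) auto
  finally show ?thesis using s_bound by simp
qed

lemma abs_sm_int_le_unit:
  fixes h :: "real \<Rightarrow> real"
  assumes \<mu>: "is_smeasure \<mu>" and hm: "h \<in> borel_measurable borel"
    and h01: "\<And>x. 0 \<le> h x \<and> h x \<le> 1" and h0: "\<And>x. x \<notin> A \<Longrightarrow> h x = 0"
    and V: "sm_bounded_on \<mu> A V"
  shows "\<bar>sm_int \<mu> h\<bar> \<le> V"
proof (rule LIMSEQ_le_const)
  show "(\<lambda>k. V + sm_mass \<mu> / real k) \<longlonglongrightarrow> V"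
    using tendsto_add[OF tendsto_const lim_const_over_n] by simp
  show "\<exists>N. \<forall>k\<ge>N. \<bar>sm_int \<mu> h\<bar> \<le> V + sm_mass \<mu> / real k"
    using abs_sm_int_le_discretised[OF assms] by (intro exI[of _ 1]) simp
qed

lemma abs_sm_int_le:
  fixes h :: "real \<Rightarrow> real"
  assumes \<mu>: "is_smeasure \<mu>" and hm: "h \<in> borel_measurable borel" and c: "c > 0"
    and hc: "\<And>x. \<bar>h x\<bar> \<le> c" and h0: "\<And>x. x \<notin> A \<Longrightarrow> h x = 0"
    and V: "sm_bounded_on \<mu> A V"
  shows "\<bar>sm_int \<mu> h\<bar> \<le> 2 * c * V"
proof -
  define p where "p x = max (h x) 0 / c" for x
  define q where "q x = max (- h x) 0 / c" for x
  have [measurable]: "h \<in> borel_measurable borel" by (rule hm)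
  have pq_meas: "p \<in> borel_measurable borel" "q \<in> borel_measurable borel"
    unfolding p_def q_def by measurable
  have pq_unit: "0 \<le> p x \<and> p x \<le> 1" "0 \<le> q x \<and> q x \<le> 1" for x
    using hc[of x] c by (auto simp: p_def q_def field_simps)
  have V_pq: "\<bar>sm_int \<mu> p\<bar> \<le> V" "\<bar>sm_int \<mu> q\<bar> \<le> V"
    using pq_meas pq_unit h0 by (auto intro!: abs_sm_int_le_unit[OF \<mu> _ _ _ V] simp: p_def q_def)
  have hpq: "h = (\<lambda>x. c * p x - c * q x)"
    using c by (auto simp: p_def q_def max_def)
  have "sm_int \<mu> h = sm_int \<mu> (\<lambda>x. c * p x) - sm_int \<mu> (\<lambda>x. c * q x)"
    unfolding hpq using pq_meas pq_unit c
    by (intro sm_int_diff[OF \<mu>, where B=c and C=c]) (auto simp: abs_mult mult_left_le)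
  then have "\<bar>sm_int \<mu> h\<bar> \<le> c * \<bar>sm_int \<mu> p\<bar> + c * \<bar>sm_int \<mu> q\<bar>"
    using c abs_triangle_ineq4[of "c * sm_int \<mu> p" "c * sm_int \<mu> q"] by (simp add: sm_int_cmult abs_mult)
  also have "\<dots> \<le> c * V + c * V"
    using V_pq c by (intro add_mono mult_left_mono) auto
  finally show ?thesis by (simp add: mult_ac)
qed

section \<open>Distribution functions and the no-mass hypotheses\<close>

lemma sm_val_Ioc_split:
  assumes "is_smeasure \<mu>" "l \<le> m" "m \<le> u"
  shows "sm_val \<mu> {l<..u} = sm_val \<mu> {l<..m} + sm_val \<mu> {m<..u}"
  using sm_val_Un[OF assms(1), of "{l<..m}" "{m<..u}"] assms(2,3) by (simp add: ivl_disj_un_two(6))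

lemma sm_val_Iic_split:
  assumes "is_smeasure \<mu>" "l \<le> u"
  shows "sm_val \<mu> {..u} = sm_val \<mu> {..l} + sm_val \<mu> {l<..u}"
  using sm_val_Un[OF assms(1), of "{..l}" "{l<..u}"] assms(2) by (simp add: ivl_disj_un_one(3) ivl_disj_int_one(3))

lemma sm_val_Ioi_split:
  assumes "is_smeasure \<mu>" "l \<le> u"
  shows "sm_val \<mu> {l<..} = sm_val \<mu> {l<..u} + sm_val \<mu> {u<..}"
  using sm_val_Un[OF assms(1), of "{l<..u}" "{u<..}"] assms(2) by (simp add: ivl_disj_un_one(5) ivl_disj_int_one)

lemma sm_val_Ioc_eq_sm_F_diff:
  assumes \<mu>: "is_smeasure \<mu>" and ab: "a \<le> b"
  shows "sm_val \<mu> {a<..b} = sm_F \<alpha> \<mu> b - sm_F \<alpha> \<mu> a"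
proof (cases \<alpha>)
  case (real c)
  consider "c \<le> a" | "a < c" "c \<le> b" | "b < c" by linarith
  then show ?thesis
  proof cases
    case 1
    then show ?thesis using sm_val_Ioc_split[OF \<mu> 1 ab] ab by (simp add: sm_F_def real)
  next
    case 2
    then show ?thesis using sm_val_Ioc_split[OF \<mu> _ 2(2), of a] by (simp add: sm_F_def real)
  next
    case 3
    then show ?thesis using sm_val_Ioc_split[OF \<mu> ab, of c] ab by (simp add: sm_F_def real)
  qed
next
  case PInf
  then show ?thesis using sm_val_Ioi_split[OF \<mu> ab] by (simp add: sm_F_def)
next
  case MInf
  then show ?thesis using sm_val_Iic_split[OF \<mu> ab] by (simp add: sm_F_def)
qed

lemma eventually_sm_bounded_on_of_limsup:
  assumes \<mu>s: "\<And>n. is_smeasure (\<mu>s n)"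
    and "limsup (\<lambda>n. ereal (sm_var (\<mu>s n) A)) \<le> ereal a" "a < \<epsilon>"
  shows "eventually (\<lambda>n. sm_bounded_on (\<mu>s n) A \<epsilon>) sequentially"
proof -
  have "limsup (\<lambda>n. ereal (sm_var (\<mu>s n) A)) < ereal \<epsilon>"
    using assms(2,3) by (simp add: le_less_trans)
  then have "eventually (\<lambda>n. ereal (sm_var (\<mu>s n) A) < ereal \<epsilon>) sequentially"
    by (rule Limsup_lessD)
  then show ?thesis
    by eventually_elim (auto intro: sm_bounded_on_mono[OF sm_bounded_on_sm_var[OF \<mu>s]])
qed

lemma no_mass_atD:
  assumes \<mu>s: "\<And>n. is_smeasure (\<mu>s n)" and "no_mass_at \<mu>s x" "\<epsilon> > 0"
  obtains N where "open N" "x \<in> N" "eventually (\<lambda>n. sm_bounded_on (\<mu>s n) N \<epsilon>) sequentially"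
proof -
  obtain N where N: "open N" "x \<in> N" "limsup (\<lambda>n. ereal (sm_var (\<mu>s n) N)) \<le> ereal (\<epsilon> / 2)"
    using assms(2,3) unfolding no_mass_at_def by (meson half_gt_zero)
  have "eventually (\<lambda>n. sm_bounded_on (\<mu>s n) N \<epsilon>) sequentially"
    using \<open>\<epsilon> > 0\<close> by (intro eventually_sm_bounded_on_of_limsup[OF \<mu>s N(3)]) simp
  with N(1,2) show ?thesis by (rule that)
qed

lemma no_mass_at_minfD:
  assumes \<mu>s: "\<And>n. is_smeasure (\<mu>s n)" and "no_mass_at_minf \<mu>s" "\<epsilon> > 0"
  obtains c where "eventually (\<lambda>n. sm_bounded_on (\<mu>s n) {..<c} \<epsilon>) sequentially"
proof -
  obtain c where c: "limsup (\<lambda>n. ereal (sm_var (\<mu>s n) {..<c})) \<le> ereal (\<epsilon> / 2)"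
    using assms(2,3) unfolding no_mass_at_minf_def by (meson half_gt_zero)
  have "eventually (\<lambda>n. sm_bounded_on (\<mu>s n) {..<c} \<epsilon>) sequentially"
    using \<open>\<epsilon> > 0\<close> by (intro eventually_sm_bounded_on_of_limsup[OF \<mu>s c]) simp
  then show ?thesis by (rule that)
qed

lemma no_mass_at_pinfD:
  assumes \<mu>s: "\<And>n. is_smeasure (\<mu>s n)" and "no_mass_at_pinf \<mu>s" "\<epsilon> > 0"
  obtains c where "eventually (\<lambda>n. sm_bounded_on (\<mu>s n) {c<..} \<epsilon>) sequentially"
proof -
  obtain c where c: "limsup (\<lambda>n. ereal (sm_var (\<mu>s n) {c<..})) \<le> ereal (\<epsilon> / 2)"
    using assms(2,3) unfolding no_mass_at_pinf_def by (meson half_gt_zero)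
  have "eventually (\<lambda>n. sm_bounded_on (\<mu>s n) {c<..} \<epsilon>) sequentially"
    using \<open>\<epsilon> > 0\<close> by (intro eventually_sm_bounded_on_of_limsup[OF \<mu>s c]) simp
  then show ?thesis by (rule that)
qed

lemma eventually_sm_bounded_on_compact:
  assumes \<mu>s: "\<And>n. is_smeasure (\<mu>s n)" and nm: "\<And>x. no_mass_at \<mu>s x" and "compact K"
  obtains V where "eventually (\<lambda>n. sm_bounded_on (\<mu>s n) K V) sequentially"
proof -
  have "\<forall>x. \<exists>N. open N \<and> x \<in> N \<and> eventually (\<lambda>n. sm_bounded_on (\<mu>s n) N 1) sequentially"
    using no_mass_atD[OF \<mu>s nm zero_less_one] by metis
  then obtain N where N: "\<And>x. open (N x)" "\<And>x. x \<in> N x"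
    "\<And>x. eventually (\<lambda>n. sm_bounded_on (\<mu>s n) (N x) 1) sequentially"
    by metis
  obtain C where C: "finite C" "K \<subseteq> (\<Union>x\<in>C. N x)"
    by (rule compactE_image[OF \<open>compact K\<close>, of K N]) (use N(1,2) in auto)
  have "eventually (\<lambda>n. \<forall>x\<in>C. sm_bounded_on (\<mu>s n) (N x) 1) sequentially"
    using C(1) N(3) by (simp add: eventually_ball_finite)
  then have "eventually (\<lambda>n. sm_bounded_on (\<mu>s n) K (real (card (N ` C)) * 1)) sequentially"
  proof eventually_elim
    case (elim n)
    have "sm_bounded_on (\<mu>s n) (\<Union>(N ` C)) (real (card (N ` C)) * 1)"
      using elim C(1) N(1) by (intro sm_bounded_on_Union[OF \<mu>s]) auto
    then show ?case using C(2) by (rule sm_bounded_on_mono) auto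
  qed
  then show ?thesis by (rule that)
qed

definition negligible_sets :: "(nat \<Rightarrow> smeasure) \<Rightarrow> (nat \<Rightarrow> real set) \<Rightarrow> bool" where
  "negligible_sets \<mu>s E \<longleftrightarrow> (\<forall>x. eventually (\<lambda>k. x \<notin> E k) sequentially) \<and>
     (\<forall>\<epsilon>>0. \<exists>Z\<in>sets borel. eventually (\<lambda>k. E k \<subseteq> Z) sequentially \<and>
        eventually (\<lambda>n. sm_bounded_on (\<mu>s n) Z \<epsilon>) sequentially)"

lemma negligible_sets_tendsto:
  assumes "negligible_sets \<mu>s E" and "\<And>k x. x \<notin> E k \<Longrightarrow> g k x = u x"
  shows "(\<lambda>k. g k x) \<longlonglongrightarrow> u x"
proof (rule tendsto_eventually)
  have "eventually (\<lambda>k. x \<notin> E k) sequentially"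
    using assms(1) unfolding negligible_sets_def by blast
  then show "eventually (\<lambda>k. g k x = u x) sequentially"
    by eventually_elim (rule assms(2))
qed

lemma negligible_sets_Un:
  assumes \<mu>s: "\<And>n. is_smeasure (\<mu>s n)" and E: "negligible_sets \<mu>s E" and E': "negligible_sets \<mu>s E'"
  shows "negligible_sets \<mu>s (\<lambda>k. E k \<union> E' k)"
  unfolding negligible_sets_def
proof (intro conjI allI impI)
  show "eventually (\<lambda>k. x \<notin> E k \<union> E' k) sequentially" for x
    using E E' unfolding negligible_sets_def by (auto intro: eventually_conj)
  fix \<epsilon> :: real assume "\<epsilon> > 0"
  then obtain Z Z' where Z: "Z \<in> sets borel" "eventually (\<lambda>k. E k \<subseteq> Z) sequentially"
      "eventually (\<lambda>n. sm_bounded_on (\<mu>s n) Z (\<epsilon> / 2)) sequentially"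
    and Z': "Z' \<in> sets borel" "eventually (\<lambda>k. E' k \<subseteq> Z') sequentially"
      "eventually (\<lambda>n. sm_bounded_on (\<mu>s n) Z' (\<epsilon> / 2)) sequentially"
    using E E' unfolding negligible_sets_def by (meson half_gt_zero)
  have "eventually (\<lambda>k. E k \<union> E' k \<subseteq> Z \<union> Z') sequentially"
    using Z(2) Z'(2) by eventually_elim auto
  moreover have "eventually (\<lambda>n. sm_bounded_on (\<mu>s n) (Z \<union> Z') \<epsilon>) sequentially"
    using Z(3) Z'(3) by eventually_elim (use sm_bounded_on_Un[OF \<mu>s Z(1)] in fastforce)
  ultimately show "\<exists>Z\<in>sets borel. eventually (\<lambda>k. E k \<union> E' k \<subseteq> Z) sequentially \<and>
        eventually (\<lambda>n. sm_bounded_on (\<mu>s n) Z \<epsilon>) sequentially"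
    using Z(1) Z'(1) by (intro bexI[of _ "Z \<union> Z'"] conjI) auto
qed

lemma negligible_sets_right_of_point:
  assumes \<mu>s: "\<And>n. is_smeasure (\<mu>s n)" and "no_mass_at \<mu>s p" and \<delta>: "\<delta> \<longlonglongrightarrow> 0"
  shows "negligible_sets \<mu>s (\<lambda>k. {p<..<p + \<delta> k})"
  unfolding negligible_sets_def
proof (intro conjI allI impI)
  have small: "eventually (\<lambda>k. \<delta> k < r) sequentially" if "r > 0" for r
    using order_tendstoD(2)[OF \<delta> that] .
  show "eventually (\<lambda>k. x \<notin> {p<..<p + \<delta> k}) sequentially" for x
  proof (cases "x \<le> p")
    case False
    then have "eventually (\<lambda>k. \<delta> k < x - p) sequentially" by (intro small) simp
    then show ?thesis by eventually_elim auto
  qed simp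
  fix \<epsilon> :: real assume "\<epsilon> > 0"
  then obtain N where N: "open N" "p \<in> N" "eventually (\<lambda>n. sm_bounded_on (\<mu>s n) N \<epsilon>) sequentially"
    using no_mass_atD[OF \<mu>s assms(2)] by blast
  then obtain \<rho> where "\<rho> > 0" "ball p \<rho> \<subseteq> N" using openE by blast
  moreover from \<open>\<rho> > 0\<close> have "eventually (\<lambda>k. \<delta> k < \<rho>) sequentially" by (rule small)
  ultimately have "eventually (\<lambda>k. {p<..<p + \<delta> k} \<subseteq> N) sequentially"
    by (auto elim!: eventually_mono simp: subset_eq dist_real_def)
  then show "\<exists>Z\<in>sets borel. eventually (\<lambda>k. {p<..<p + \<delta> k} \<subseteq> Z) sequentially \<and>
        eventually (\<lambda>n. sm_bounded_on (\<mu>s n) Z \<epsilon>) sequentially"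
    using N by (intro bexI[of _ N] conjI) auto
qed

lemma eventually_le_real_nat: "eventually (\<lambda>k. a \<le> real k) sequentially"
  using filterlim_real_sequentially unfolding filterlim_at_top by blast

lemma negligible_sets_lower_tail:
  assumes \<mu>s: "\<And>n. is_smeasure (\<mu>s n)" and "no_mass_at_minf \<mu>s"
  shows "negligible_sets \<mu>s (\<lambda>k. {..<c - real k})"
  unfolding negligible_sets_def
proof (intro conjI allI impI)
  show "eventually (\<lambda>k. x \<notin> {..<c - real k}) sequentially" for x
    using eventually_le_real_nat[of "c - x"] by eventually_elim auto
  fix \<epsilon> :: real assume "\<epsilon> > 0"
  then obtain d where "eventually (\<lambda>n. sm_bounded_on (\<mu>s n) {..<d} \<epsilon>) sequentially"
    using no_mass_at_minfD[OF \<mu>s assms(2)] by blast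
  moreover have "eventually (\<lambda>k. {..<c - real k} \<subseteq> {..<d}) sequentially"
    using eventually_le_real_nat[of "c - d"] by eventually_elim auto
  ultimately show "\<exists>Z\<in>sets borel. eventually (\<lambda>k. {..<c - real k} \<subseteq> Z) sequentially \<and>
        eventually (\<lambda>n. sm_bounded_on (\<mu>s n) Z \<epsilon>) sequentially"
    by (intro bexI[of _ "{..<d}"] conjI) auto
qed

lemma negligible_sets_upper_tail:
  assumes \<mu>s: "\<And>n. is_smeasure (\<mu>s n)" and "no_mass_at_pinf \<mu>s"
  shows "negligible_sets \<mu>s (\<lambda>k. {c + real k<..})"
  unfolding negligible_sets_def
proof (intro conjI allI impI)
  show "eventually (\<lambda>k. x \<notin> {c + real k<..}) sequentially" for x
    using eventually_le_real_nat[of "x - c"] by eventually_elim auto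
  fix \<epsilon> :: real assume "\<epsilon> > 0"
  then obtain d where "eventually (\<lambda>n. sm_bounded_on (\<mu>s n) {d<..} \<epsilon>) sequentially"
    using no_mass_at_pinfD[OF \<mu>s assms(2)] by blast
  moreover have "eventually (\<lambda>k. {c + real k<..} \<subseteq> {d<..}) sequentially"
    using eventually_le_real_nat[of "d - c"] by eventually_elim auto
  ultimately show "\<exists>Z\<in>sets borel. eventually (\<lambda>k. {c + real k<..} \<subseteq> Z) sequentially \<and>
        eventually (\<lambda>n. sm_bounded_on (\<mu>s n) Z \<epsilon>) sequentially"
    by (intro bexI[of _ "{d<..}"] conjI) auto
qed

section \<open>Vague convergence implies convergence of distribution functions\<close>

lemma tendsto_by_approximation:
  fixes a :: "nat \<Rightarrow> real"
  assumes approx: "\<And>e. e > 0 \<Longrightarrow>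
    \<exists>b c. b \<longlonglongrightarrow> c \<and> eventually (\<lambda>n. \<bar>a n - b n\<bar> \<le> C * e) sequentially \<and> \<bar>l - c\<bar> \<le> C * e"
  shows "a \<longlonglongrightarrow> l"
proof (rule tendstoI)
  fix r :: real assume "r > 0"
  define D where "D = \<bar>C\<bar> + 1"
  define e where "e = r / (4 * D)"
  have D: "0 < D" "C \<le> D" unfolding D_def by linarith+
  then have "e > 0" and De: "D * e = r / 4"
    using \<open>r > 0\<close> by (simp_all add: e_def)
  have Ce: "C * e \<le> r / 4"
    using mult_right_mono[OF D(2) less_imp_le[OF \<open>e > 0\<close>]] De by linarith
  obtain b c where b: "b \<longlonglongrightarrow> c" and ab: "eventually (\<lambda>n. \<bar>a n - b n\<bar> \<le> C * e) sequentially"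
    and lc: "\<bar>l - c\<bar> \<le> C * e"
    using approx[OF \<open>e > 0\<close>] by blast
  have "eventually (\<lambda>n. dist (b n) c < r / 4) sequentially"
    using tendstoD[OF b, of "r / 4"] \<open>r > 0\<close> by simp
  with ab show "eventually (\<lambda>n. dist (a n) l < r) sequentially"
  proof eventually_elim
    case (elim n)
    have "\<bar>a n - l\<bar> \<le> \<bar>a n - b n\<bar> + \<bar>b n - c\<bar> + \<bar>c - l\<bar>"
      using abs_triangle_ineq[of "a n - b n" "b n - c"] abs_triangle_ineq[of "a n - c" "c - l"] by simp
    then show ?case
      using elim lc Ce abs_minus_commute[of c l] unfolding dist_real_def by linarith
  qed
qed

lemma abs_sm_int_diff_le:
  fixes f g :: "real \<Rightarrow> real"
  assumes \<mu>: "is_smeasure \<mu>"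
    and f: "f \<in> borel_measurable borel" "\<And>x. \<bar>f x\<bar> \<le> B"
    and g: "g \<in> borel_measurable borel" "\<And>x. \<bar>g x\<bar> \<le> C"
    and fg: "\<And>x. \<bar>f x - g x\<bar> \<le> \<epsilon>" "\<epsilon> > 0" "\<And>x. x \<notin> A \<Longrightarrow> f x = g x"
    and V: "sm_bounded_on \<mu> A V"
  shows "\<bar>sm_int \<mu> f - sm_int \<mu> g\<bar> \<le> 2 * \<epsilon> * V"
  using fg V f(1) g(1)
  by (simp add: sm_int_diff[OF \<mu> f g, symmetric] abs_sm_int_le[OF \<mu>, where A=A])

lemma tendsto_sm_int_dominated:
  fixes g :: "nat \<Rightarrow> real \<Rightarrow> real"
  assumes \<mu>: "is_smeasure \<mu>" and gm: "\<And>k. g k \<in> borel_measurable borel"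
    and fm: "f \<in> borel_measurable borel"
    and gb: "\<And>k x. \<bar>g k x\<bar> \<le> B" and lim: "\<And>x. (\<lambda>k. g k x) \<longlonglongrightarrow> f x"
  shows "(\<lambda>k. sm_int \<mu> (g k)) \<longlonglongrightarrow> sm_int \<mu> f"
proof -
  have "(\<lambda>k. integral\<^sup>L M (g k)) \<longlonglongrightarrow> integral\<^sup>L M f"
    if M: "finite_measure M" "sets M = sets borel" for M
  proof (rule integral_dominated_convergence[where w="\<lambda>x. B"])
    show "f \<in> borel_measurable M" "g k \<in> borel_measurable M" for k
      using fm gm measurable_cong_sets[OF M(2) refl, of borel] by metis+
  qed (use lim gb finite_measure.integrable_const[OF M(1)] in auto)
  from tendsto_diff[OF this this] show ?thesis
    using is_smeasureD[OF \<mu>] unfolding sm_int_def by simp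
qed

lemma vague_conv_tendsto_sm_val:
  fixes g :: "nat \<Rightarrow> real \<Rightarrow> real"
  assumes \<mu>s: "\<And>n. is_smeasure (\<mu>s n)" and \<mu>: "is_smeasure \<mu>" and vc: "vague_conv \<mu>s \<mu>"
    and I: "I \<in> sets borel"
    and g_cont: "\<And>k. continuous_on UNIV (g k)"
    and g_supp: "\<And>k. \<exists>K. compact K \<and> (\<forall>x. x \<notin> K \<longrightarrow> g k x = 0)"
    and g_unit: "\<And>k x. 0 \<le> g k x \<and> g k x \<le> 1"
    and g_eq: "\<And>k x. x \<notin> E k \<Longrightarrow> g k x = indicator I x"
    and E: "negligible_sets \<mu>s E"
  shows "(\<lambda>n. sm_val (\<mu>s n) I) \<longlonglongrightarrow> sm_val \<mu> I"
proof (rule tendsto_by_approximation[where C=2])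
  fix e :: real assume "e > 0"
  have gm: "g k \<in> borel_measurable borel" for k
    using g_cont by (rule borel_measurable_continuous_onI)
  have Im: "(indicator I :: real \<Rightarrow> real) \<in> borel_measurable borel"
    using I by simp
  have g_abs: "\<bar>g k x\<bar> \<le> 1" "\<bar>indicator I x - g k x\<bar> \<le> 1" for k x
    using g_unit[of k x] by (auto simp: indicator_def)
  obtain Z where Z: "eventually (\<lambda>k. E k \<subseteq> Z) sequentially"
    "eventually (\<lambda>n. sm_bounded_on (\<mu>s n) Z e) sequentially"
    using E \<open>e > 0\<close> unfolding negligible_sets_def by blast
  have "(\<lambda>k. g k x) \<longlonglongrightarrow> indicator I x" for x
    by (rule negligible_sets_tendsto[OF E]) (rule g_eq)
  then have "(\<lambda>k. sm_int \<mu> (g k)) \<longlonglongrightarrow> sm_val \<mu> I"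
    using tendsto_sm_int_dominated[OF \<mu> gm Im g_abs(1)] sm_int_indicator[OF \<mu>] by simp
  then have "eventually (\<lambda>k. \<bar>sm_int \<mu> (g k) - sm_val \<mu> I\<bar> < e) sequentially"
    using tendstoD \<open>e > 0\<close> by (force simp: dist_real_def)
  with Z(1) obtain k where k: "E k \<subseteq> Z" "\<bar>sm_int \<mu> (g k) - sm_val \<mu> I\<bar> < e"
    using eventually_happens'[OF sequentially_bot] eventually_conj by blast
  have g_eq_Z: "indicator I x = g k x" if "x \<notin> Z" for x
    by (metis g_eq k(1) subsetD that)
  have "(\<lambda>n. sm_int (\<mu>s n) (g k)) \<longlonglongrightarrow> sm_int \<mu> (g k)"
    using vc g_cont g_supp unfolding vague_conv_def by blast
  moreover have "eventually (\<lambda>n. \<bar>sm_val (\<mu>s n) I - sm_int (\<mu>s n) (g k)\<bar> \<le> 2 * e) sequentially"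
    using Z(2)
  proof eventually_elim
    case (elim n)
    have "\<bar>sm_int (\<mu>s n) (indicator I) - sm_int (\<mu>s n) (g k)\<bar> \<le> 2 * 1 * e"
      using g_eq_Z \<open>e > 0\<close> g_abs elim
      by (intro abs_sm_int_diff_le[OF \<mu>s Im _ gm, where A=Z and B=1 and C=1]) auto
    then show ?case using sm_int_indicator[OF \<mu>s] by simp
  qed
  ultimately show "\<exists>b c. b \<longlonglongrightarrow> c \<and> eventually (\<lambda>n. \<bar>sm_val (\<mu>s n) I - b n\<bar> \<le> 2 * e) sequentially
      \<and> \<bar>sm_val \<mu> I - c\<bar> \<le> 2 * e"
    using k(2) by force
qed

definition trapezoid :: "real \<Rightarrow> real \<Rightarrow> real \<Rightarrow> real \<Rightarrow> real \<Rightarrow> real" where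
  "trapezoid a b c d x = max 0 (min 1 (min ((x - a) / (b - a)) ((d - x) / (d - c))))"

lemma continuous_on_trapezoid: "continuous_on UNIV (trapezoid a b c d)"
proof -
  have "trapezoid a b c d =
      (\<lambda>x. max 0 (min 1 (min ((x - a) * inverse (b - a)) ((d - x) * inverse (d - c)))))"
    by (simp add: fun_eq_iff trapezoid_def divide_inverse)
  then show ?thesis by (simp add: continuous_intros)
qed

lemma trapezoid_unit: "0 \<le> trapezoid a b c d x \<and> trapezoid a b c d x \<le> 1"
  unfolding trapezoid_def by auto

lemma trapezoid_eq_0:
  assumes "a < b" "c < d" "x \<notin> {a<..<d}"
  shows "trapezoid a b c d x = 0"
proof -
  have "(x - a) / (b - a) \<le> 0 \<or> (d - x) / (d - c) \<le> 0"
    using assms by (auto simp: divide_nonpos_pos)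
  then show ?thesis unfolding trapezoid_def by linarith
qed

lemma trapezoid_eq_1:
  assumes "a < b" "c < d" "b \<le> x" "x \<le> c"
  shows "trapezoid a b c d x = 1"
proof -
  have "1 \<le> (x - a) / (b - a)" "1 \<le> (d - x) / (d - c)"
    using assms by (simp_all add: le_divide_eq)
  then show ?thesis unfolding trapezoid_def by simp
qed

lemma trapezoid_compact_support:
  assumes "a < b" "c < d"
  shows "\<exists>K. compact K \<and> (\<forall>x. x \<notin> K \<longrightarrow> trapezoid a b c d x = 0)"
  using assms by (intro exI[of _ "{a..d}"]) (auto intro: trapezoid_eq_0)

lemma trapezoid_eq_indicator:
  assumes "a < b" "b \<le> c" "c < d" "x \<notin> {a<..<b} \<union> {c<..<d}"
  shows "trapezoid a b c d x = indicator {b..c} x"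
  using assms trapezoid_eq_0[of a b c d x] trapezoid_eq_1[of a b c d x]
  by (cases "b \<le> x \<and> x \<le> c") (auto simp: indicator_def)

lemma vague_conv_tendsto_sm_val_Ioc:
  assumes \<mu>s: "\<And>n. is_smeasure (\<mu>s n)" and \<mu>: "is_smeasure \<mu>" and vc: "vague_conv \<mu>s \<mu>"
    and nm: "\<And>x. no_mass_at \<mu>s x" and "l < r"
  shows "(\<lambda>n. sm_val (\<mu>s n) {l<..r}) \<longlonglongrightarrow> sm_val \<mu> {l<..r}"
proof -
  define \<delta> where "\<delta> k = (r - l) * inverse (real (Suc k))" for k
  have \<delta>: "0 < \<delta> k" "\<delta> k \<le> r - l" for k
    using \<open>l < r\<close> unfolding \<delta>_def by (auto intro!: mult_left_le simp: inverse_le_1_iff)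
  have "\<delta> \<longlonglongrightarrow> 0"
    unfolding \<delta>_def by (rule tendsto_mult_right_zero[OF LIMSEQ_inverse_real_of_nat])
  then have E: "negligible_sets \<mu>s (\<lambda>k. {l<..<l + \<delta> k} \<union> {r<..<r + \<delta> k})"
    by (intro negligible_sets_Un negligible_sets_right_of_point \<mu>s nm)
  show ?thesis
  proof (rule vague_conv_tendsto_sm_val[OF \<mu>s \<mu> vc _ continuous_on_trapezoid _ trapezoid_unit _ E])
    show "\<exists>K. compact K \<and> (\<forall>x. x \<notin> K \<longrightarrow> trapezoid l (l + \<delta> k) r (r + \<delta> k) x = 0)" for k
      using \<delta> by (intro trapezoid_compact_support) auto
    show "trapezoid l (l + \<delta> k) r (r + \<delta> k) x = indicator {l<..r} x"
      if "x \<notin> {l<..<l + \<delta> k} \<union> {r<..<r + \<delta> k}" for k x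
      using trapezoid_eq_indicator[of l "l + \<delta> k" r "r + \<delta> k" x] \<delta>[of k] that
      by (auto simp: indicator_def)
  qed simp
qed

lemma vague_conv_tendsto_sm_val_Iic:
  assumes \<mu>s: "\<And>n. is_smeasure (\<mu>s n)" and \<mu>: "is_smeasure \<mu>" and vc: "vague_conv \<mu>s \<mu>"
    and nm: "\<And>x. no_mass_at \<mu>s x" and minf: "no_mass_at_minf \<mu>s"
  shows "(\<lambda>n. sm_val (\<mu>s n) {..u}) \<longlonglongrightarrow> sm_val \<mu> {..u}"
proof -
  define \<delta> where "\<delta> k = inverse (real (Suc k))" for k
  have \<delta>: "0 < \<delta> k" for k by (simp add: \<delta>_def)
  have "\<delta> \<longlonglongrightarrow> 0"
    unfolding \<delta>_def by (rule LIMSEQ_inverse_real_of_nat)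
  then have E: "negligible_sets \<mu>s (\<lambda>k. {..<u - 1 - real k} \<union> {u<..<u + \<delta> k})"
    by (intro negligible_sets_Un negligible_sets_lower_tail negligible_sets_right_of_point \<mu>s nm minf)
  show ?thesis
  proof (rule vague_conv_tendsto_sm_val[OF \<mu>s \<mu> vc _ continuous_on_trapezoid _ trapezoid_unit _ E])
    show "\<exists>K. compact K \<and> (\<forall>x. x \<notin> K \<longrightarrow> trapezoid (u - 2 - real k) (u - 1 - real k) u (u + \<delta> k) x = 0)"
      for k
      using \<delta> by (intro trapezoid_compact_support) auto
    show "trapezoid (u - 2 - real k) (u - 1 - real k) u (u + \<delta> k) x = indicator {..u} x"
      if "x \<notin> {..<u - 1 - real k} \<union> {u<..<u + \<delta> k}" for k x
      using trapezoid_eq_indicator[of "u - 2 - real k" "u - 1 - real k" u "u + \<delta> k" x] \<delta>[of k] that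
      by (auto simp: indicator_def)
  qed simp
qed

lemma vague_conv_tendsto_sm_val_Ioi:
  assumes \<mu>s: "\<And>n. is_smeasure (\<mu>s n)" and \<mu>: "is_smeasure \<mu>" and vc: "vague_conv \<mu>s \<mu>"
    and nm: "\<And>x. no_mass_at \<mu>s x" and pinf: "no_mass_at_pinf \<mu>s"
  shows "(\<lambda>n. sm_val (\<mu>s n) {l<..}) \<longlonglongrightarrow> sm_val \<mu> {l<..}"
proof -
  define \<delta> where "\<delta> k = inverse (real (Suc k))" for k
  have \<delta>: "0 < \<delta> k" "\<delta> k \<le> 1" for k by (simp_all add: \<delta>_def inverse_le_1_iff)
  have "\<delta> \<longlonglongrightarrow> 0"
    unfolding \<delta>_def by (rule LIMSEQ_inverse_real_of_nat)
  then have E: "negligible_sets \<mu>s (\<lambda>k. {l<..<l + \<delta> k} \<union> {l + 1 + real k<..})"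
    by (intro negligible_sets_Un negligible_sets_upper_tail negligible_sets_right_of_point \<mu>s nm pinf)
  show ?thesis
  proof (rule vague_conv_tendsto_sm_val[OF \<mu>s \<mu> vc _ continuous_on_trapezoid _ trapezoid_unit _ E])
    show "\<exists>K. compact K \<and> (\<forall>x. x \<notin> K \<longrightarrow> trapezoid l (l + \<delta> k) (l + 1 + real k) (l + 2 + real k) x = 0)"
      for k
      using \<delta> by (intro trapezoid_compact_support) auto
    show "trapezoid l (l + \<delta> k) (l + 1 + real k) (l + 2 + real k) x = indicator {l<..} x"
      if "x \<notin> {l<..<l + \<delta> k} \<union> {l + 1 + real k<..}" for k x
      using trapezoid_eq_indicator[of l "l + \<delta> k" "l + 1 + real k" "l + 2 + real k" x] \<delta>[of k] that
      by (auto simp: indicator_def)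
  qed simp
qed

lemma vague_conv_imp_tendsto_sm_F:
  assumes \<mu>s: "\<And>n. is_smeasure (\<mu>s n)" and \<mu>: "is_smeasure \<mu>" and vc: "vague_conv \<mu>s \<mu>"
    and nm: "\<And>x. no_mass_at \<mu>s x"
    and minf: "\<alpha> = -\<infinity> \<Longrightarrow> no_mass_at_minf \<mu>s"
    and pinf: "\<alpha> = \<infinity> \<Longrightarrow> no_mass_at_pinf \<mu>s"
  shows "(\<lambda>n. sm_F \<alpha> (\<mu>s n) x) \<longlonglongrightarrow> sm_F \<alpha> \<mu> x"
proof (cases \<alpha>)
  case (real a)
  consider "a = x" | "a < x" | "x < a" by linarith
  then show ?thesis
  proof cases
    case 1
    then show ?thesis using real by (simp add: sm_F_def sm_val_def)
  next
    case 2
    then show ?thesis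
      using real vague_conv_tendsto_sm_val_Ioc[OF \<mu>s \<mu> vc nm 2] by (simp add: sm_F_def)
  next
    case 3
    then show ?thesis
      using real tendsto_minus[OF vague_conv_tendsto_sm_val_Ioc[OF \<mu>s \<mu> vc nm 3]] by (simp add: sm_F_def)
  qed
next
  case PInf
  then show ?thesis
    using tendsto_minus[OF vague_conv_tendsto_sm_val_Ioi[OF \<mu>s \<mu> vc nm pinf]] by (simp add: sm_F_def)
next
  case MInf
  then show ?thesis
    using vague_conv_tendsto_sm_val_Iic[OF \<mu>s \<mu> vc nm minf] by (simp add: sm_F_def)
qed

section \<open>Convergence of distribution functions implies vague convergence\<close>

lemma compact_support_bounds:
  fixes f :: "real \<Rightarrow> real"
  assumes f: "continuous_on UNIV f" and K: "compact K" "\<And>x. x \<notin> K \<Longrightarrow> f x = 0"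
  obtains R B where "\<And>x. R < \<bar>x\<bar> \<Longrightarrow> f x = 0" "\<And>x. \<bar>f x\<bar> \<le> B"
proof -
  obtain R where R: "\<forall>x\<in>K. \<bar>x\<bar> \<le> R"
    using compact_imp_bounded[OF K(1)] bounded_real by blast
  obtain B where B: "\<forall>y\<in>f ` K. \<bar>y\<bar> \<le> B"
    using compact_imp_bounded[OF compact_continuous_image[OF continuous_on_subset[OF f] K(1)]]
      bounded_real by blast
  show ?thesis
  proof (rule that[of R "max B 0"])
    show "f x = 0" if "R < \<bar>x\<bar>" for x
      using R K(2) that by force
    show "\<bar>f x\<bar> \<le> max B 0" for x
      using B K(2)[of x] by (cases "x \<in> K") auto
  qed
qed

lemma uniformly_continuous_on_vanishing_outside:
  fixes f :: "real \<Rightarrow> real"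
  assumes f: "continuous_on UNIV f" and R: "\<And>x. R < \<bar>x\<bar> \<Longrightarrow> f x = 0"
  shows "uniformly_continuous_on UNIV f"
  unfolding uniformly_continuous_on_def
proof (intro allI impI)
  fix e :: real assume "e > 0"
  have uc: "uniformly_continuous_on (cball 0 (R + 1)) f"
    by (rule compact_uniformly_continuous[OF continuous_on_subset[OF f] compact_cball]) simp
  obtain \<delta> where "\<delta> > 0"
    and \<delta>: "\<And>x x'. x \<in> cball 0 (R + 1) \<Longrightarrow> x' \<in> cball 0 (R + 1) \<Longrightarrow> dist x' x < \<delta> \<Longrightarrow> dist (f x') (f x) < e"
    using uniformly_continuous_onE[OF uc \<open>e > 0\<close>] by blast
  have "dist (f x') (f x) < e" if "dist x' x < min \<delta> 1" for x x'
  proof (cases "\<bar>x\<bar> \<le> R + 1 \<and> \<bar>x'\<bar> \<le> R + 1")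
    case True
    then show ?thesis using \<delta>[of x x'] that by (simp add: dist_real_def)
  next
    case False
    then have "R < \<bar>x\<bar>" "R < \<bar>x'\<bar>" using that by (auto simp: dist_real_def)
    then show ?thesis using R \<open>e > 0\<close> by simp
  qed
  then show "\<exists>d>0. \<forall>x\<in>UNIV. \<forall>x'\<in>UNIV. dist x' x < d \<longrightarrow> dist (f x') (f x) < e"
    using \<open>\<delta> > 0\<close> by (intro exI[of _ "min \<delta> 1"]) auto
qed

text \<open>The atoms of \<open>\<mu>\<close> are countable, so some translate of the lattice \<open>h\<int>\<close> avoids all of them.\<close>

lemma continuity_point_grid:
  assumes \<mu>: "is_smeasure \<mu>"
  obtains c where "\<And>i::int. continuity_point \<mu> (c + of_int i * h)"
proof -
  define D where "D = {x. sm_val \<mu> {x} \<noteq> 0}"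
  have "D \<subseteq> {x. measure (fst \<mu>) {x} \<noteq> 0} \<union> {x. measure (snd \<mu>) {x} \<noteq> 0}"
    by (auto simp: D_def sm_val_def)
  then have "countable D"
    using finite_measure.countable_support[OF is_smeasureD(1)[OF \<mu>]]
      finite_measure.countable_support[OF is_smeasureD(2)[OF \<mu>]]
    by (blast intro: countable_subset)
  then have "countable (\<Union>i::int. (\<lambda>x. x - of_int i * h) ` D)"
    by (intro countable_UN) auto
  then obtain c where "c \<notin> (\<Union>i::int. (\<lambda>x. x - of_int i * h) ` D)"
    using uncountable_UNIV_real by (metis UNIV_eq_I)
  then have "continuity_point \<mu> (c + of_int i * h)" for i :: int
    unfolding continuity_point_def D_def by (force simp: image_iff)
  then show ?thesis by (rule that)
qed

definition grid_step :: "(real \<Rightarrow> real) \<Rightarrow> real \<Rightarrow> real \<Rightarrow> int set \<Rightarrow> real \<Rightarrow> real" where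
  "grid_step f c h I x = (\<Sum>i\<in>I. f (c + of_int (i + 1) * h) *
      indicator {c + of_int i * h<..c + of_int (i + 1) * h} x)"

lemma grid_step_measurable: "grid_step f c h I \<in> borel_measurable borel"
  unfolding grid_step_def by measurable

lemma sm_int_grid_step:
  assumes \<mu>: "is_smeasure \<mu>" and "finite I" "0 \<le> h"
  shows "sm_int \<mu> (grid_step f c h I) = (\<Sum>i\<in>I. f (c + of_int (i + 1) * h) *
      (sm_F \<alpha> \<mu> (c + of_int (i + 1) * h) - sm_F \<alpha> \<mu> (c + of_int i * h)))"
proof -
  have "sm_int \<mu> (grid_step f c h I) = (\<Sum>i\<in>I. f (c + of_int (i + 1) * h) *
      sm_val \<mu> {c + of_int i * h<..c + of_int (i + 1) * h})"
    unfolding grid_step_def by (rule sm_int_sum_indicator[OF \<mu> \<open>finite I\<close>]) simp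
  also have "\<dots> = (\<Sum>i\<in>I. f (c + of_int (i + 1) * h) *
      (sm_F \<alpha> \<mu> (c + of_int (i + 1) * h) - sm_F \<alpha> \<mu> (c + of_int i * h)))"
  proof (intro sum.cong refl)
    fix i :: int
    have "c + of_int i * h \<le> c + of_int (i + 1) * h"
      using \<open>0 \<le> h\<close> by (simp add: algebra_simps)
    then show "f (c + of_int (i + 1) * h) * sm_val \<mu> {c + of_int i * h<..c + of_int (i + 1) * h} =
        f (c + of_int (i + 1) * h) * (sm_F \<alpha> \<mu> (c + of_int (i + 1) * h) - sm_F \<alpha> \<mu> (c + of_int i * h))"
      by (subst sm_val_Ioc_eq_sm_F_diff[OF \<mu>]) auto
  qed
  finally show ?thesis .
qed

definition grid_index :: "real \<Rightarrow> real \<Rightarrow> real \<Rightarrow> int" where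
  "grid_index c h x = \<lceil>(x - c) / h\<rceil> - 1"

lemma grid_index_iff:
  fixes h c x :: real and i :: int
  assumes "h > 0"
  shows "c + of_int i * h < x \<and> x \<le> c + of_int (i + 1) * h \<longleftrightarrow> i = grid_index c h x"
proof -
  have "i = grid_index c h x \<longleftrightarrow> \<lceil>(x - c) / h\<rceil> = i + 1" by (auto simp: grid_index_def)
  also have "\<dots> \<longleftrightarrow> of_int i < (x - c) / h \<and> (x - c) / h \<le> of_int i + 1"
    by (simp add: ceiling_eq_iff)
  also have "\<dots> \<longleftrightarrow> c + of_int i * h < x \<and> x \<le> c + of_int (i + 1) * h"
    using assms by (simp add: less_divide_eq divide_le_eq algebra_simps)
  finally show ?thesis by simp
qed

lemma grid_index:
  assumes "h > 0"
  shows "c + of_int (grid_index c h x) * h < x" "x \<le> c + of_int (grid_index c h x + 1) * h"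
  using grid_index_iff[OF assms, of c "grid_index c h x" x] by simp_all

lemma grid_step_eq:
  assumes "h > 0" "finite I"
  shows "grid_step f c h I x =
    (if grid_index c h x \<in> I then f (c + of_int (grid_index c h x + 1) * h) else 0)"
proof -
  have "grid_step f c h I x = (\<Sum>i\<in>I. if i = grid_index c h x then f (c + of_int (i + 1) * h) else 0)"
    unfolding grid_step_def
  proof (intro sum.cong refl)
    fix i
    show "f (c + of_int (i + 1) * h) * indicator {c + of_int i * h<..c + of_int (i + 1) * h} x =
        (if i = grid_index c h x then f (c + of_int (i + 1) * h) else 0)"
      using grid_index_iff[OF assms(1), of c i x] by (simp add: indicator_def)
  qed
  then show ?thesis using \<open>finite I\<close> by simp
qed

lemma grid_step_approximation:
  fixes f :: "real \<Rightarrow> real"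
  assumes h: "0 < h" and osc: "\<And>x y. \<bar>x - y\<bar> \<le> h \<Longrightarrow> \<bar>f x - f y\<bar> \<le> \<epsilon>"
    and supp: "\<And>x. R < \<bar>x\<bar> \<Longrightarrow> f x = 0"
  shows "\<bar>f x - grid_step f c h {grid_index c h (-R)..grid_index c h R} x\<bar> \<le> \<epsilon>"
proof -
  define t where "t i = c + of_int i * h" for i :: int
  define j where "j = grid_index c h"
  have cell: "t (j y) < y" "y \<le> t (j y + 1)" for y
    using grid_index[OF h] by (simp_all add: t_def j_def)
  have t_mono: "t a \<le> t b" if "a \<le> b" for a b
    using h that by (simp add: t_def)
  show ?thesis
  proof (cases "j x \<in> {j (-R)..j R}")
    case True
    have "\<bar>x - t (j x + 1)\<bar> \<le> h"
      using cell[of x] by (simp add: t_def algebra_simps)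
    then show ?thesis
      using True osc grid_step_eq[OF h] by (simp add: t_def j_def)
  next
    case False
    then have "j x + 1 \<le> j (-R) \<or> j R + 1 \<le> j x" by auto
    then have "x < -R \<or> R < x"
      using cell[of x] cell[of "-R"] cell[of R] t_mono[of "j x + 1" "j (-R)"] t_mono[of "j R + 1" "j x"]
      by fastforce
    then show ?thesis
      using False supp[of x] osc[of x x] less_imp_le[OF h] grid_step_eq[OF h] by (auto simp: j_def)
  qed
qed

lemma grid_step_vanishes:
  assumes h: "0 < h" "h \<le> 1" and x: "R + 1 < \<bar>x\<bar>"
  shows "grid_step f c h {grid_index c h (-R)..grid_index c h R} x = 0"
proof -
  define t where "t i = c + of_int i * h" for i :: int
  define j where "j = grid_index c h"
  have cell: "t (j y) < y" "y \<le> t (j y + 1)" for y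
    using grid_index[OF h(1)] by (simp_all add: t_def j_def)
  have t_mono: "t a \<le> t b" if "a \<le> b" for a b
    using h that by (simp add: t_def)
  have t_step: "t (i + 1) = t i + h" for i
    by (simp add: t_def algebra_simps)
  have "j x \<notin> {j (-R)..j R}"
  proof
    assume "j x \<in> {j (-R)..j R}"
    then have "t (j (-R)) \<le> t (j x)" "t (j x + 1) \<le> t (j R + 1)"
      by (auto intro: t_mono)
    then show False
      using x cell[of x] cell[of "-R"] cell[of R] t_step[of "j (-R)"] t_step[of "j R"] h(2)
      by linarith
  qed
  then show ?thesis using grid_step_eq[OF h(1)] by (auto simp: j_def)
qed

lemma step_approximation_on_continuity_grid:
  fixes f :: "real \<Rightarrow> real"
  assumes \<mu>: "is_smeasure \<mu>" and f: "continuous_on UNIV f" and supp: "\<And>x. R < \<bar>x\<bar> \<Longrightarrow> f x = 0"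
    and "\<epsilon> > 0"
  obtains c h I where "0 < h" "finite I" "\<And>i::int. continuity_point \<mu> (c + of_int i * h)"
    "\<And>x. \<bar>f x - grid_step f c h I x\<bar> \<le> \<epsilon>" "\<And>x. R + 1 < \<bar>x\<bar> \<Longrightarrow> grid_step f c h I x = 0"
proof -
  have "uniformly_continuous_on UNIV f"
    by (rule uniformly_continuous_on_vanishing_outside[OF f supp])
  then obtain \<delta> where "\<delta> > 0" and \<delta>: "\<forall>x\<in>UNIV. \<forall>x'\<in>UNIV. dist x' x < \<delta> \<longrightarrow> dist (f x') (f x) < \<epsilon>"
    using \<open>\<epsilon> > 0\<close> unfolding uniformly_continuous_on_def by blast
  define h where "h = min 1 (\<delta> / 2)"
  have h: "0 < h" "h \<le> 1" using \<open>\<delta> > 0\<close> by (auto simp: h_def)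
  have osc: "\<bar>f x - f y\<bar> \<le> \<epsilon>" if "\<bar>x - y\<bar> \<le> h" for x y
  proof -
    have "dist x y < \<delta>" using that \<open>\<delta> > 0\<close> by (simp add: h_def dist_real_def)
    then show ?thesis using \<delta> by (force simp: dist_real_def)
  qed
  obtain c where "\<And>i::int. continuity_point \<mu> (c + of_int i * h)"
    using continuity_point_grid[OF \<mu>] by blast
  with h show ?thesis
    by (intro that[of h "{grid_index c h (-R)..grid_index c h R}" c]
        grid_step_approximation[where f=f and R=R, OF h(1) osc supp] grid_step_vanishes) auto
qed

lemma tendsto_sm_int_grid_step:
  assumes \<mu>s: "\<And>n. is_smeasure (\<mu>s n)" and \<mu>: "is_smeasure \<mu>" and "finite I" "0 \<le> h"
    and F: "\<forall>x. continuity_point \<mu> x \<longrightarrow> (\<lambda>n. sm_F \<alpha> (\<mu>s n) x) \<longlonglongrightarrow> sm_F \<alpha> \<mu> x"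
    and grid: "\<And>i::int. continuity_point \<mu> (c + of_int i * h)"
  shows "(\<lambda>n. sm_int (\<mu>s n) (grid_step f c h I)) \<longlonglongrightarrow> sm_int \<mu> (grid_step f c h I)"
  unfolding sm_int_grid_step[OF \<mu>s \<open>finite I\<close> \<open>0 \<le> h\<close>, where \<alpha>=\<alpha>]
    sm_int_grid_step[OF \<mu> \<open>finite I\<close> \<open>0 \<le> h\<close>, where \<alpha>=\<alpha>]
  by (intro tendsto_sum tendsto_mult tendsto_const tendsto_diff F[rule_format] grid)

lemma tendsto_sm_F_imp_vague_conv:
  assumes \<mu>s: "\<And>n. is_smeasure (\<mu>s n)" and \<mu>: "is_smeasure \<mu>"
    and nm: "\<And>x. no_mass_at \<mu>s x"
    and F: "\<forall>x. continuity_point \<mu> x \<longrightarrow> (\<lambda>n. sm_F \<alpha> (\<mu>s n) x) \<longlonglongrightarrow> sm_F \<alpha> \<mu> x"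
  shows "vague_conv \<mu>s \<mu>"
  unfolding vague_conv_def
proof (intro allI impI)
  fix f :: "real \<Rightarrow> real"
  assume "continuous_on UNIV f \<and> (\<exists>K. compact K \<and> (\<forall>x. x \<notin> K \<longrightarrow> f x = 0))"
  then obtain K where f_cont: "continuous_on UNIV f" and K: "compact K" "\<And>x. x \<notin> K \<Longrightarrow> f x = 0"
    by blast
  obtain R B where supp: "\<And>x. R < \<bar>x\<bar> \<Longrightarrow> f x = 0" and B: "\<And>x. \<bar>f x\<bar> \<le> B"
    using compact_support_bounds[OF f_cont K] by metis
  have fm: "f \<in> borel_measurable borel"
    using f_cont by (rule borel_measurable_continuous_onI)
  define A where "A = {-R - 1..R + 1}"
  obtain V where V: "eventually (\<lambda>n. sm_bounded_on (\<mu>s n) A V) sequentially"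
    using eventually_sm_bounded_on_compact[OF \<mu>s nm, of A] unfolding A_def by blast
  define M where "M = max V (sm_mass \<mu>)"
  show "(\<lambda>n. sm_int (\<mu>s n) f) \<longlonglongrightarrow> sm_int \<mu> f"
  proof (rule tendsto_by_approximation[where C="2 * M"])
    fix e :: real assume "e > 0"
    obtain c h I where "0 < h" "finite I" and grid: "\<And>i::int. continuity_point \<mu> (c + of_int i * h)"
      and s_approx: "\<And>x. \<bar>f x - grid_step f c h I x\<bar> \<le> e"
      and s_supp: "\<And>x. R + 1 < \<bar>x\<bar> \<Longrightarrow> grid_step f c h I x = 0"
      by (rule step_approximation_on_continuity_grid[where f=f and R=R, OF \<mu> f_cont supp \<open>e > 0\<close>])
        (assumption | rule that)+
    have err: "\<bar>sm_int \<nu> f - sm_int \<nu> (grid_step f c h I)\<bar> \<le> 2 * M * e"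
      if "is_smeasure \<nu>" "sm_bounded_on \<nu> A U" "U \<le> M" for \<nu> U
    proof -
      have "\<bar>sm_int \<nu> f - sm_int \<nu> (grid_step f c h I)\<bar> \<le> 2 * e * U"
      proof (rule abs_sm_int_diff_le[OF that(1) fm B grid_step_measurable _ s_approx \<open>e > 0\<close> _ that(2)])
        show "\<bar>grid_step f c h I x\<bar> \<le> B + e" for x
          using B[of x] s_approx[of x] by linarith
        show "f x = grid_step f c h I x" if "x \<notin> A" for x
          using that supp s_supp by (auto simp: A_def)
      qed
      also have "\<dots> \<le> 2 * M * e"
        using mult_left_mono[OF that(3), of "2 * e"] \<open>e > 0\<close> by (simp add: mult_ac)
      finally show ?thesis .
    qed
    have "(\<lambda>n. sm_int (\<mu>s n) (grid_step f c h I)) \<longlonglongrightarrow> sm_int \<mu> (grid_step f c h I)"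
      using \<open>0 < h\<close> by (intro tendsto_sm_int_grid_step[OF \<mu>s \<mu> \<open>finite I\<close> _ F grid]) simp
    moreover have "eventually (\<lambda>n. \<bar>sm_int (\<mu>s n) f - sm_int (\<mu>s n) (grid_step f c h I)\<bar> \<le> 2 * M * e) sequentially"
      using V by eventually_elim (rule err[OF \<mu>s], auto simp: M_def)
    moreover have "\<bar>sm_int \<mu> f - sm_int \<mu> (grid_step f c h I)\<bar> \<le> 2 * M * e"
      by (rule err[OF \<mu> sm_bounded_on_total[OF \<mu>]]) (simp add: M_def)
    ultimately show "\<exists>b c. b \<longlonglongrightarrow> c \<and> eventually (\<lambda>n. \<bar>sm_int (\<mu>s n) f - b n\<bar> \<le> 2 * M * e) sequentially
        \<and> \<bar>sm_int \<mu> f - c\<bar> \<le> 2 * M * e"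
      by (intro exI conjI)
  qed
qed

theorem theorem3p11:
  fixes \<mu>s :: "nat \<Rightarrow> smeasure" and \<mu> :: smeasure and \<alpha> :: ereal
  assumes "\<And>n. is_smeasure (\<mu>s n)" and "is_smeasure \<mu>"
    and "\<And>x. no_mass_at \<mu>s x"
    and "\<alpha> = -\<infinity> \<Longrightarrow> no_mass_at_minf \<mu>s"
    and "\<alpha> = \<infinity> \<Longrightarrow> no_mass_at_pinf \<mu>s"
  shows "(\<forall>x. continuity_point \<mu> x \<longrightarrow> (\<lambda>n. sm_F \<alpha> (\<mu>s n) x) \<longlonglongrightarrow> sm_F \<alpha> \<mu> x)
         \<longleftrightarrow> vague_conv \<mu>s \<mu>"
  using tendsto_sm_F_imp_vague_conv[OF assms(1-3)] vague_conv_imp_tendsto_sm_F[OF assms(1,2) _ assms(3-5)]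
  by blast

end
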